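(* Let $n\ge1$, $N\ge3$, $m=n+N$, let $u>0$ solve $\partial_tu=\Delta_xu$ on $\mathbb{R}^n\times(0,\infty)$ with $u=t^{-n/2}e^{-f}$, fix $0<\tau_1<\tau_2$, and assume $f$ and all of its partial derivatives in $x$ and $t$ are bounded on $\mathbb{R}^n\times[\tau_1,\tau_2]$. With $v,b,\psi$ as in the context, there is a constant $C$ depending only on $n$, $f$ and $\tau_2$ such that at every $(x,y)$ with $\frac{|y|^2}{2N}\in[\tau_1,\tau_2]$, \[ |\psi|,\ |\nabla_x\psi|,\ |\nabla_y b|\le C\qquad\text{and}\qquad |\nabla_y\psi|,\ |\nabla_x b|\le C\,N^{-1/2}. \]
   Context: $\mathbb{R}^m=\mathbb{R}^n\times\mathbb{R}^N$, points $(x,y)$, $r=|y|$; $\nabla_x,\nabla_y$ are the gradients in the $x$ and $y$ variables and $\Delta$ is the Euclidean Laplacian on $\mathbb{R}^m$. $v(x,y)=r^{2-m}\exp(-f(x,\tfrac{r^2}{2N}))$, $b=v^{1/(2-m)}$, $\psi=b^m\Delta v$. *)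

theory Defs
  imports "HOL-Analysis.Analysis"
begin

text \<open>Functions of (x,t) with x in R^n (index type 'n) and t real.
  A direction is either None (the t-variable) or Some j (the coordinate x_j).\<close>

definition dline :: "'n option \<Rightarrow> (real^'n \<Rightarrow> real \<Rightarrow> real) \<Rightarrow> real^'n \<Rightarrow> real \<Rightarrow> real \<Rightarrow> real" where
  "dline d g x t = (case d of
      None \<Rightarrow> (\<lambda>s. g x s)
    | Some j \<Rightarrow> (\<lambda>s. g (\<chi> k. if k = j then s else x $ k) t))"

definition dbase :: "'n option \<Rightarrow> real^'n \<Rightarrow> real \<Rightarrow> real" where
  "dbase d x t = (case d of None \<Rightarrow> t | Some j \<Rightarrow> x $ j)"

definition pd :: "'n option \<Rightarrow> (real^'n \<Rightarrow> real \<Rightarrow> real) \<Rightarrow> real^'n \<Rightarrow> real \<Rightarrow> real" where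
  "pd d g x t = deriv (dline d g x t) (dbase d x t)"

definition pds :: "'n option list \<Rightarrow> (real^'n \<Rightarrow> real \<Rightarrow> real) \<Rightarrow> real^'n \<Rightarrow> real \<Rightarrow> real" where
  "pds ds g = foldr pd ds g"

text \<open>Functions of (x,y) on R^m = R^n x R^N; y is represented as nat => real,
  only the coordinates y 0, ..., y (N-1) are used.\<close>

definition sqnorm :: "nat \<Rightarrow> (nat \<Rightarrow> real) \<Rightarrow> real" where
  "sqnorm N y = (\<Sum>i<N. (y i)\<^sup>2)"

definition pdx :: "'n \<Rightarrow> (real^'n \<Rightarrow> (nat \<Rightarrow> real) \<Rightarrow> real) \<Rightarrow> real^'n \<Rightarrow> (nat \<Rightarrow> real) \<Rightarrow> real" where
  "pdx j G x y = deriv (\<lambda>s. G (\<chi> k. if k = j then s else x $ k) y) (x $ j)"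

definition pdy :: "nat \<Rightarrow> (real^'n \<Rightarrow> (nat \<Rightarrow> real) \<Rightarrow> real) \<Rightarrow> real^'n \<Rightarrow> (nat \<Rightarrow> real) \<Rightarrow> real" where
  "pdy i G x y = deriv (\<lambda>s. G x (y(i := s))) (y i)"

definition gradx_norm :: "(real^'n \<Rightarrow> (nat \<Rightarrow> real) \<Rightarrow> real) \<Rightarrow> real^'n \<Rightarrow> (nat \<Rightarrow> real) \<Rightarrow> real" where
  "gradx_norm G x y = sqrt (\<Sum>j\<in>UNIV. (pdx j G x y)\<^sup>2)"

definition grady_norm :: "nat \<Rightarrow> (real^'n \<Rightarrow> (nat \<Rightarrow> real) \<Rightarrow> real) \<Rightarrow> real^'n \<Rightarrow> (nat \<Rightarrow> real) \<Rightarrow> real" where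
  "grady_norm N G x y = sqrt (\<Sum>i<N. (pdy i G x y)\<^sup>2)"

definition laplacian :: "nat \<Rightarrow> (real^'n \<Rightarrow> (nat \<Rightarrow> real) \<Rightarrow> real) \<Rightarrow> real^'n \<Rightarrow> (nat \<Rightarrow> real) \<Rightarrow> real" where
  "laplacian N G x y = (\<Sum>j\<in>UNIV. pdx j (pdx j G) x y) + (\<Sum>i<N. pdy i (pdy i G) x y)"

definition vfun :: "nat \<Rightarrow> (real^'n \<Rightarrow> real \<Rightarrow> real) \<Rightarrow> real^'n \<Rightarrow> (nat \<Rightarrow> real) \<Rightarrow> real" where
  "vfun N f x y = sqrt (sqnorm N y) powr (2 - real (CARD('n) + N))
      * exp (- f x (sqnorm N y / (2 * real N)))"

definition bfun :: "nat \<Rightarrow> (real^'n \<Rightarrow> real \<Rightarrow> real) \<Rightarrow> real^'n \<Rightarrow> (nat \<Rightarrow> real) \<Rightarrow> real" where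
  "bfun N f x y = vfun N f x y powr (1 / (2 - real (CARD('n) + N)))"

definition psifun :: "nat \<Rightarrow> (real^'n \<Rightarrow> real \<Rightarrow> real) \<Rightarrow> real^'n \<Rightarrow> (nat \<Rightarrow> real) \<Rightarrow> real" where
  "psifun N f x y = bfun N f x y ^ (CARD('n) + N) * laplacian N (vfun N f) x y"

end

theory Submission
  imports Defs
begin

(*
  Write q = |y|^2, s = q / (2N) and k = 1 / (m - 2). Then v is the radial function
  q^((2 - m) / 2) e^(-f(x, s)) and b = sqrt q e^(k f(x, s)). The Laplacian of v splits into
  Delta_x v = v (|grad_x f|^2 - Delta_x f) and the radial part 4 q v'' + 2 N v' in q; the heat
  equation for u turns |grad_x f|^2 - Delta_x f into -f_t - n / (2 s). Multiplying by
  b^m = q e^(2 k f) / v, everything except a polynomial P in s, f_t, f_tt cancels: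
  psi = e^(2 k f) P, and P does not involve N.
  Since 0 < k <= 1 and s stays in [tau1, tau2], psi, grad_x psi and d psi / ds are bounded
  independently of N. In y, chain rule through s contributes |grad_y s| = |y| / N = sqrt (2 s / N),
  hence the factor N^(-1/2) for grad_y psi, while grad_y b is of order one. Finally
  grad_x b = sqrt (2 s N) e^(k f) k grad_x f, and N k = 1 + (2 - n) k is bounded.
*)

lemma Bfun_principalI: "(\<And>z. z \<in> S \<Longrightarrow> norm (g z) \<le> B) \<Longrightarrow> Bfun g (principal S)"
  by (rule BfunI[where K = B]) (simp add: eventually_principal)

lemma Bfun_add:
  fixes f g :: "'a \<Rightarrow> 'b::real_normed_vector"
  assumes "Bfun f F" and "Bfun g F"
  shows "Bfun (\<lambda>x. f x + g x) F"
proof -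
  obtain A B where "eventually (\<lambda>x. norm (f x) \<le> A) F" and "eventually (\<lambda>x. norm (g x) \<le> B) F"
    using assms by (auto elim!: BfunE)
  then have "eventually (\<lambda>x. norm (f x + g x) \<le> A + B) F"
    by eventually_elim (rule norm_triangle_le, simp)
  then show ?thesis
    by (rule BfunI)
qed

lemma Bfun_minus:
  fixes f :: "'a \<Rightarrow> 'b::real_normed_vector"
  shows "Bfun f F \<Longrightarrow> Bfun (\<lambda>x. - f x) F"
  by (simp add: Bfun_def)

lemma Bfun_diff:
  fixes f g :: "'a \<Rightarrow> 'b::real_normed_vector"
  shows "Bfun f F \<Longrightarrow> Bfun g F \<Longrightarrow> Bfun (\<lambda>x. f x - g x) F"
  using Bfun_add[of f F "\<lambda>x. - g x"] Bfun_minus[of g F] by simp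

lemma Bfun_mult:
  fixes f g :: "'a \<Rightarrow> 'b::real_normed_algebra"
  assumes "Bfun f F" and "Bfun g F"
  shows "Bfun (\<lambda>x. f x * g x) F"
proof -
  obtain A where "0 < A" and A: "eventually (\<lambda>x. norm (f x) \<le> A) F"
    using assms(1) by (rule BfunE)
  obtain B where "eventually (\<lambda>x. norm (g x) \<le> B) F"
    using assms(2) by (rule BfunE)
  with A have "eventually (\<lambda>x. norm (f x * g x) \<le> A * B) F"
    by eventually_elim (rule order_trans[OF norm_mult_ineq mult_mono], use \<open>0 < A\<close> in simp_all)
  then show ?thesis
    by (rule BfunI)
qed

lemma Bfun_power:
  fixes f :: "'a \<Rightarrow> 'b::real_normed_algebra_1"
  assumes "Bfun f F"
  shows "Bfun (\<lambda>x. f x ^ n) F"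
proof (induction n)
  case (Suc n)
  then show ?case
    using Bfun_mult[OF assms Suc] by simp
qed simp

lemma Bfun_exp:
  fixes f :: "'a \<Rightarrow> real"
  assumes "Bfun f F"
  shows "Bfun (\<lambda>x. exp (f x)) F"
proof -
  obtain B where "eventually (\<lambda>x. norm (f x) \<le> B) F"
    using assms by (auto elim!: BfunE)
  then have "eventually (\<lambda>x. norm (exp (f x)) \<le> exp B) F"
    by eventually_elim (simp add: abs_le_iff)
  then show ?thesis
    by (rule BfunI)
qed

lemma Bfun_sqrt:
  fixes f :: "'a \<Rightarrow> real"
  assumes "Bfun f F"
  shows "Bfun (\<lambda>x. sqrt (f x)) F"
proof -
  obtain B where "eventually (\<lambda>x. norm (f x) \<le> B) F"
    using assms by (auto elim!: BfunE)
  then have "eventually (\<lambda>x. norm (sqrt (f x)) \<le> sqrt B) F"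
    by eventually_elim (simp add: real_sqrt_abs'[symmetric])
  then show ?thesis
    by (rule BfunI)
qed

lemma Bfun_abs:
  fixes f :: "'a \<Rightarrow> real"
  shows "Bfun f F \<Longrightarrow> Bfun (\<lambda>x. \<bar>f x\<bar>) F"
  by (simp add: Bfun_def)

abbreviation vec_upd :: "real^'n \<Rightarrow> 'n \<Rightarrow> real \<Rightarrow> real^'n" where
  "vec_upd x j \<sigma> \<equiv> (\<chi> k. if k = j then \<sigma> else x $ k)"

lemma vec_upd_same [simp]: "vec_upd x j (x $ j) = x"
  by (simp add: vec_eq_iff)

lemma pds_Nil [simp]: "pds [] f = f"
  by (simp add: pds_def)

lemma pds_Cons: "pds (d # ds) f = pd d (pds ds f)"
  by (simp add: pds_def)

definition partials_differentiable :: "(real^'n \<Rightarrow> real \<Rightarrow> real) \<Rightarrow> bool" where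
  "partials_differentiable f \<longleftrightarrow>
     (\<forall>ds d x t. 0 < t \<longrightarrow> dline d (pds ds f) x t differentiable (at (dbase d x t)))"

lemma has_real_derivative_pds_t:
  assumes "partials_differentiable f" and "0 < t"
  shows "((\<lambda>s. pds ds f x s) has_real_derivative pds (None # ds) f x t) (at t)"
proof -
  have "dline None (pds ds f) x t differentiable (at (dbase None x t))"
    using assms unfolding partials_differentiable_def by blast
  then show ?thesis
    by (simp add: DERIV_deriv_iff_real_differentiable[symmetric] pds_Cons pd_def dline_def dbase_def)
qed

lemma has_real_derivative_pds_x:
  assumes "partials_differentiable f" and "0 < t"
  shows "((\<lambda>\<sigma>. pds ds f (vec_upd x j \<sigma>) t) has_real_derivative pds (Some j # ds) f x t) (at (x $ j))"
proof -
  have "dline (Some j) (pds ds f) x t differentiable (at (dbase (Some j) x t))"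
    using assms unfolding partials_differentiable_def by blast
  then show ?thesis
    by (simp add: DERIV_deriv_iff_real_differentiable[symmetric] pds_Cons pd_def dline_def dbase_def)
qed

lemmas has_real_derivative_f_t = has_real_derivative_pds_t[where ds = "[]", simplified]
lemmas has_real_derivative_f_x = has_real_derivative_pds_x[where ds = "[]", simplified]

lemma has_real_derivative_pds_t_scaled:
  assumes "partials_differentiable f" and "0 < q" and "0 < a"
  shows "((\<lambda>q. pds ds f x (q / a)) has_real_derivative pds (None # ds) f x (q / a) / a) (at q)"
  using DERIV_chain2[OF has_real_derivative_pds_t[OF assms(1)] DERIV_cdivide[OF DERIV_ident]] assms
  by simp

lemma has_real_derivative_powr_pos:
  "0 < q \<Longrightarrow> ((\<lambda>q. q powr a) has_real_derivative q powr a * (a / q)) (at q)"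
  by (rule DERIV_cong[OF has_real_derivative_powr]) (auto simp: powr_diff)

definition log_heat_equation :: "(real^'n \<Rightarrow> real \<Rightarrow> real) \<Rightarrow> bool" where
  "log_heat_equation f \<longleftrightarrow> (\<forall>x t. 0 < t \<longrightarrow>
     (\<Sum>j\<in>UNIV. (pds [Some j] f x t)\<^sup>2 - pds [Some j, Some j] f x t)
       = - pds [None] f x t - real CARD('n) / (2 * t))"

lemma pd_pd_exp_neg:
  assumes "partials_differentiable f" and "0 < t"
    and "\<And>x'. g x' t = c * exp (- f x' t)"
  shows "pd (Some j) (pd (Some j) g) x t
           = c * exp (- f x t) * ((pds [Some j] f x t)\<^sup>2 - pds [Some j, Some j] f x t)"
proof -
  have pd_g: "pd (Some j) g x' t = - (c * exp (- f x' t)) * pds [Some j] f x' t" for x'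
  proof -
    have "pd (Some j) g x' t = deriv (\<lambda>\<sigma>. c * exp (- f (vec_upd x' j \<sigma>) t)) (x' $ j)"
      unfolding pd_def dline_def dbase_def using assms(3) by simp
    also have "\<dots> = c * (exp (- f x' t) * (- pds [Some j] f x' t))"
      by (rule DERIV_imp_deriv) (auto intro!: derivative_eq_intros has_real_derivative_f_x[OF assms(1,2)])
    finally show ?thesis by simp
  qed
  have "pd (Some j) (pd (Some j) g) x t
      = deriv (\<lambda>\<sigma>. - (c * exp (- f (vec_upd x j \<sigma>) t)) * pds [Some j] f (vec_upd x j \<sigma>) t) (x $ j)"
    unfolding pd_def[of "Some j" "pd (Some j) g"] dline_def dbase_def by (simp add: pd_g)
  also have "\<dots> = - (c * (exp (- f x t) * (- pds [Some j] f x t))) * pds [Some j] f x t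
        + - (c * exp (- f x t)) * pds [Some j, Some j] f x t"
    by (rule DERIV_imp_deriv)
      (auto intro!: derivative_eq_intros has_real_derivative_f_x[OF assms(1,2)] has_real_derivative_pds_x[OF assms(1,2)])
  finally show ?thesis by (simp add: algebra_simps power2_eq_square)
qed

lemma log_heat_equation_if_heat:
  fixes u f :: "real^'n \<Rightarrow> real \<Rightarrow> real"
  assumes f: "partials_differentiable f"
    and u_f: "\<forall>x t. 0 < t \<longrightarrow> u x t = t powr (- real CARD('n) / 2) * exp (- f x t)"
    and heat: "\<forall>x t. 0 < t \<longrightarrow>
          ((\<lambda>s. u x s) has_real_derivative (\<Sum>j\<in>UNIV. pd (Some j) (pd (Some j) u) x t)) (at t)"
  shows "log_heat_equation f"
  unfolding log_heat_equation_def
proof (intro allI impI)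
  fix x and t :: real
  assume t: "0 < t"
  let ?p = "t powr (- real CARD('n) / 2)" and ?e = "exp (- f x t)"
  have "((\<lambda>s. s powr (- real CARD('n) / 2) * exp (- f x s)) has_real_derivative
       ?p * (- real CARD('n) / 2 / t) * ?e + ?e * (- pds [None] f x t) * ?p) (at t)"
    by (intro DERIV_mult has_real_derivative_powr_pos[OF t] DERIV_chain2[where f = exp, OF DERIV_exp]
        DERIV_minus has_real_derivative_f_t[OF f t])
  then have "((\<lambda>s. u x s) has_real_derivative
       ?p * (- real CARD('n) / 2 / t) * ?e + ?e * (- pds [None] f x t) * ?p) (at t)"
    by (rule has_field_derivative_transform_within_open[of _ _ _ "{0<..}"]) (use t u_f in auto)
  then have "(\<Sum>j\<in>UNIV. pd (Some j) (pd (Some j) u) x t)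
      = ?p * (- real CARD('n) / 2 / t) * ?e + ?e * (- pds [None] f x t) * ?p"
    using DERIV_unique heat t by blast
  then have "?p * ?e * (\<Sum>j\<in>UNIV. (pds [Some j] f x t)\<^sup>2 - pds [Some j, Some j] f x t)
      = ?p * ?e * (- pds [None] f x t - real CARD('n) / (2 * t))"
    using pd_pd_exp_neg[OF f t, of u ?p] u_f t by (simp add: sum_distrib_left algebra_simps)
  moreover have "?p * ?e \<noteq> 0"
    using t by simp
  ultimately show "(\<Sum>j\<in>UNIV. (pds [Some j] f x t)\<^sup>2 - pds [Some j, Some j] f x t)
      = - pds [None] f x t - real CARD('n) / (2 * t)"
    by simp
qed

lemma sqnorm_nonneg: "0 \<le> sqnorm N y"
  unfolding sqnorm_def by (simp add: sum_nonneg)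

lemma sqnorm_fun_upd: "i < N \<Longrightarrow> sqnorm N (y(i := \<sigma>)) = sqnorm N y - (y i)\<^sup>2 + \<sigma>\<^sup>2"
proof -
  assume i: "i < N"
  have "(\<Sum>k<N. ((y(i := \<sigma>)) k)\<^sup>2) = (\<Sum>k<N. (y k)\<^sup>2 + (if k = i then \<sigma>\<^sup>2 - (y i)\<^sup>2 else 0))"
    by (rule sum.cong) auto
  then show ?thesis
    using i unfolding sqnorm_def by (simp add: sum.distrib)
qed

lemma eventually_sqnorm_fun_upd_pos:
  assumes "0 < sqnorm N y" and "i < N"
  shows "eventually (\<lambda>\<sigma>. 0 < sqnorm N (y(i := \<sigma>))) (nhds (y i))"
proof -
  have "open {\<sigma>::real. 0 < sqnorm N y - (y i)\<^sup>2 + \<sigma>\<^sup>2}"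
    by (intro open_Collect_less continuous_intros)
  then have "eventually (\<lambda>\<sigma>. \<sigma> \<in> {\<sigma>. 0 < sqnorm N y - (y i)\<^sup>2 + \<sigma>\<^sup>2}) (nhds (y i))"
    by (rule eventually_nhds_in_open) (simp add: assms(1))
  then show ?thesis
    by eventually_elim (simp add: sqnorm_fun_upd assms(2))
qed

lemma pdy_radial_mult_coord:
  assumes G: "\<And>y'. 0 < sqnorm N y' \<Longrightarrow> G x y' = g (sqnorm N y') * (y' i) ^ p"
    and g: "(g has_real_derivative g') (at (sqnorm N y))"
    and y: "0 < sqnorm N y" and i: "i < N"
  shows "pdy i G x y = 2 * g' * (y i) ^ Suc p + real p * g (sqnorm N y) * (y i) ^ (p - 1)"
proof -
  let ?q = "\<lambda>\<sigma>. sqnorm N y - (y i)\<^sup>2 + \<sigma>\<^sup>2"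
  have "pdy i G x y = deriv (\<lambda>\<sigma>. g (?q \<sigma>) * \<sigma> ^ p) (y i)"
    unfolding pdy_def
    by (rule deriv_cong_ev[OF _ refl])
      (use eventually_sqnorm_fun_upd_pos[OF y i] in \<open>eventually_elim, simp add: G sqnorm_fun_upd i\<close>)
  also have "\<dots> = g' * (2 * y i) * (y i) ^ p + g (sqnorm N y) * (real p * (y i) ^ (p - 1))"
  proof (rule DERIV_imp_deriv)
    have "(g has_real_derivative g') (at (?q (y i)))"
      using g by simp
    then show "((\<lambda>\<sigma>. g (?q \<sigma>) * \<sigma> ^ p) has_real_derivative
        g' * (2 * y i) * (y i) ^ p + g (sqnorm N y) * (real p * (y i) ^ (p - 1))) (at (y i))"
      by (auto intro!: derivative_eq_intros DERIV_chain2[where g = ?q])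
  qed
  finally show ?thesis
    by (simp add: algebra_simps)
qed

lemma pdy_radial:
  assumes "\<And>y'. 0 < sqnorm N y' \<Longrightarrow> G x y' = g (sqnorm N y')"
    and "(g has_real_derivative g') (at (sqnorm N y))"
    and "0 < sqnorm N y" and "i < N"
  shows "pdy i G x y = 2 * g' * y i"
proof -
  have "pdy i G x y = 2 * g' * (y i) ^ Suc 0 + real 0 * g (sqnorm N y) * (y i) ^ (0 - 1)"
    by (rule pdy_radial_mult_coord[where G = G and g = g]) (simp_all add: assms)
  then show ?thesis
    by simp
qed

lemma sum_pdy_pdy_radial:
  assumes G: "\<And>y'. 0 < sqnorm N y' \<Longrightarrow> G x y' = g (sqnorm N y')"
    and g: "\<And>q. 0 < q \<Longrightarrow> (g has_real_derivative g' q) (at q)"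
    and g': "(g' has_real_derivative g'') (at (sqnorm N y))"
    and y: "0 < sqnorm N y"
  shows "(\<Sum>i<N. pdy i (pdy i G) x y) = 4 * sqnorm N y * g'' + 2 * real N * g' (sqnorm N y)"
proof -
  have "pdy i (pdy i G) x y = 4 * g'' * (y i)\<^sup>2 + 2 * g' (sqnorm N y)" if i: "i < N" for i
  proof -
    have "pdy i G x y' = 2 * g' (sqnorm N y') * y' i" if "0 < sqnorm N y'" for y'
      by (rule pdy_radial[where G = G and g = g]) (use G g that i in auto)
    then have "pdy i (pdy i G) x y
        = 2 * (2 * g'') * (y i) ^ Suc 1 + real 1 * (2 * g' (sqnorm N y)) * (y i) ^ (1 - 1)"
      by (intro pdy_radial_mult_coord[where g = "\<lambda>q. 2 * g' q"] DERIV_cmult g' y i) simp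
    then show ?thesis
      by (simp add: power2_eq_square)
  qed
  then have "(\<Sum>i<N. pdy i (pdy i G) x y) = (\<Sum>i<N. 4 * g'' * (y i)\<^sup>2 + 2 * g' (sqnorm N y))"
    by simp
  then show ?thesis
    by (simp add: sum.distrib sum_distrib_left[symmetric] sqnorm_def)
qed

lemma grady_norm_radial:
  assumes "\<And>y'. 0 < sqnorm N y' \<Longrightarrow> G x y' = g (sqnorm N y')"
    and "(g has_real_derivative g') (at (sqnorm N y))" and "0 < sqnorm N y"
  shows "grady_norm N G x y = 2 * \<bar>g'\<bar> * sqrt (sqnorm N y)"
proof -
  have "(\<Sum>i<N. (pdy i G x y)\<^sup>2) = (2 * g')\<^sup>2 * sqnorm N y"
    using pdy_radial[where G = G and g = g, OF _ assms(2,3)] assms(1)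
    by (simp add: sqnorm_def sum_distrib_left power_mult_distrib)
  then show ?thesis
    unfolding grady_norm_def by (simp add: real_sqrt_mult)
qed

lemma pdx_vec_upd:
  assumes "\<And>\<sigma>. G (vec_upd x j \<sigma>) y = h \<sigma>"
  shows "pdx j G x y = deriv h (x $ j)"
  unfolding pdx_def using assms by simp

lemma gradx_norm_le:
  fixes G :: "real^'n \<Rightarrow> (nat \<Rightarrow> real) \<Rightarrow> real"
  assumes "\<And>j. \<bar>pdx j G x y\<bar> \<le> K"
  shows "gradx_norm G x y \<le> sqrt (real CARD('n)) * K"
proof -
  have "(\<Sum>j\<in>UNIV. (pdx j G x y)\<^sup>2) \<le> (\<Sum>j\<in>(UNIV :: 'n set). K\<^sup>2)"
  proof (rule sum_mono)
    fix j
    show "(pdx j G x y)\<^sup>2 \<le> K\<^sup>2"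
      using power_mono[OF assms[of j] abs_ge_zero, of 2] by simp
  qed
  then have "gradx_norm G x y \<le> sqrt (real CARD('n) * K\<^sup>2)"
    unfolding gradx_norm_def by simp
  also have "\<dots> = sqrt (real CARD('n)) * K"
    using assms[of undefined] by (simp add: real_sqrt_mult)
  finally show ?thesis .
qed

lemma pdx_eq_pd: "pdx j G x y = pd (Some j) (\<lambda>x' _. G x' y) x t"
  by (simp add: pdx_def pd_def dline_def dbase_def)

lemma pdx_pdx_eq_pd_pd: "pdx j (pdx j G) x y = pd (Some j) (pd (Some j) (\<lambda>x' _. G x' y)) x t"
proof -
  have "(\<lambda>x' _. pdx j G x' y) = pd (Some j) (\<lambda>x' _. G x' y)"
    by (intro ext) (simp add: pdx_eq_pd)
  moreover have "pdx j (pdx j G) x y = pd (Some j) (\<lambda>x' _. pdx j G x' y) x t"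
    by (rule pdx_eq_pd)
  ultimately show ?thesis
    by simp
qed

lemma vfun_radial:
  fixes f :: "real^'n \<Rightarrow> real \<Rightarrow> real"
  shows "vfun N f x y = sqnorm N y powr ((2 - real (CARD('n) + N)) / 2) * exp (- f x (sqnorm N y / (2 * real N)))"
  unfolding vfun_def by (simp add: sqnorm_nonneg powr_half_sqrt[symmetric] powr_powr)

lemma has_real_derivative_v_profile:
  fixes f :: "real^'n \<Rightarrow> real \<Rightarrow> real"
  assumes f: "partials_differentiable f" and q: "0 < q" and a: "0 < a"
  shows "((\<lambda>q. q powr \<alpha> * exp (- f x (q / a))) has_real_derivative
           q powr \<alpha> * exp (- f x (q / a)) * (\<alpha> / q - pds [None] f x (q / a) / a)) (at q)"
proof -
  have "((\<lambda>q. f x (q / a)) has_real_derivative pds [None] f x (q / a) / a) (at q)"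
    using has_real_derivative_pds_t_scaled[OF f q a, of "[]"] by simp
  from DERIV_mult[OF has_real_derivative_powr_pos[OF q]
      DERIV_chain2[where f = exp, OF DERIV_exp DERIV_minus[OF this]]]
  show ?thesis
    by (rule DERIV_cong) (simp add: algebra_simps)
qed

lemma has_real_derivative_v_profile_deriv:
  fixes f :: "real^'n \<Rightarrow> real \<Rightarrow> real"
  assumes f: "partials_differentiable f" and q: "0 < q" and a: "0 < a"
  shows "((\<lambda>q. q powr \<alpha> * exp (- f x (q / a)) * (\<alpha> / q - pds [None] f x (q / a) / a)) has_real_derivative
           q powr \<alpha> * exp (- f x (q / a)) * ((\<alpha> / q - pds [None] f x (q / a) / a)\<^sup>2
             - \<alpha> / q\<^sup>2 - pds [None, None] f x (q / a) / a\<^sup>2)) (at q)"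
proof -
  have "((\<lambda>q. \<alpha> / q) has_real_derivative - \<alpha> / q\<^sup>2) (at q)"
    using q by (auto intro!: derivative_eq_intros simp: power2_eq_square)
  from DERIV_mult[OF has_real_derivative_v_profile[OF f q a]
      DERIV_diff[OF this DERIV_cdivide[OF has_real_derivative_pds_t_scaled[OF f q a]]]]
  show ?thesis
    by (rule DERIV_cong) (use q a in \<open>simp add: field_simps power2_eq_square\<close>)
qed

lemma sum_pdx_pdx_vfun:
  fixes f :: "real^'n \<Rightarrow> real \<Rightarrow> real"
  assumes f: "partials_differentiable f" and heat: "log_heat_equation f"
    and N: "0 < N" and y: "0 < sqnorm N y"
  defines "s \<equiv> sqnorm N y / (2 * real N)"
  shows "(\<Sum>j\<in>UNIV. pdx j (pdx j (vfun N f)) x y)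
           = vfun N f x y * (- pds [None] f x s - real CARD('n) / (2 * s))"
proof -
  have s: "0 < s"
    using N y by (simp add: s_def)
  have "pdx j (pdx j (vfun N f)) x y
      = vfun N f x y * ((pds [Some j] f x s)\<^sup>2 - pds [Some j, Some j] f x s)" for j
    unfolding pdx_pdx_eq_pd_pd[where t = s] vfun_radial[where y = y] s_def[symmetric]
    by (rule pd_pd_exp_neg[OF f s]) (simp add: vfun_radial s_def)
  then show ?thesis
    using heat s by (simp add: log_heat_equation_def sum_distrib_left[symmetric])
qed

lemma sum_pdy_pdy_vfun:
  fixes f :: "real^'n \<Rightarrow> real \<Rightarrow> real" and x :: "real^'n"
  assumes f: "partials_differentiable f" and N: "0 < N" and y: "0 < sqnorm N y"
  defines "\<alpha> \<equiv> (2 - real (CARD('n) + N)) / 2" and "q \<equiv> sqnorm N y"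
    and "a \<equiv> 2 * real N" and "s \<equiv> sqnorm N y / (2 * real N)"
  defines "h \<equiv> \<alpha> / q - pds [None] f x s / a"
  shows "(\<Sum>i<N. pdy i (pdy i (vfun N f)) x y)
           = vfun N f x y * (4 * q * (h\<^sup>2 - \<alpha> / q\<^sup>2 - pds [None, None] f x s / a\<^sup>2) + 2 * real N * h)"
proof -
  define g where "g q = q powr \<alpha> * exp (- f x (q / a))" for q
  define g' where "g' q = g q * (\<alpha> / q - pds [None] f x (q / a) / a)" for q
  have a: "0 < a"
    using N by (simp add: a_def)
  have v: "vfun N f x y' = g (sqnorm N y')" for y'
    by (simp add: vfun_radial g_def \<alpha>_def a_def)
  have "(\<Sum>i<N. pdy i (pdy i (vfun N f)) x y)
      = 4 * q * (g q * (h\<^sup>2 - \<alpha> / q\<^sup>2 - pds [None, None] f x s / a\<^sup>2)) + 2 * real N * g' q"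
    unfolding q_def
  proof (rule sum_pdy_pdy_radial[where G = "vfun N f" and g = g])
    show "(g has_real_derivative g' q') (at q')" if "0 < q'" for q'
      unfolding g_def g'_def by (rule has_real_derivative_v_profile[OF f that a])
    show "(g' has_real_derivative g (sqnorm N y) * (h\<^sup>2 - \<alpha> / (sqnorm N y)\<^sup>2
        - pds [None, None] f x s / a\<^sup>2)) (at (sqnorm N y))"
      using has_real_derivative_v_profile_deriv[OF f y a]
      unfolding g_def g'_def h_def q_def s_def a_def by simp
  qed (simp_all add: v y)
  also have "g' q = g q * h"
    by (simp add: g'_def h_def q_def s_def a_def)
  finally show ?thesis
    by (simp add: v[of y, folded q_def] algebra_simps)
qed

definition psi_poly :: "(real^'n \<Rightarrow> real \<Rightarrow> real) \<Rightarrow> real^'n \<Rightarrow> real \<Rightarrow> real" where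
  "psi_poly f x s = real CARD('n) * (real CARD('n) - 2) + 4 * s * (real CARD('n) - 2) * pds [None] f x s
     + 4 * s\<^sup>2 * ((pds [None] f x s)\<^sup>2 - pds [None, None] f x s)"

lemma laplacian_vfun:
  fixes f :: "real^'n \<Rightarrow> real \<Rightarrow> real"
  assumes f: "partials_differentiable f" and heat: "log_heat_equation f"
    and N: "0 < N" and y: "0 < sqnorm N y"
  shows "laplacian N (vfun N f) x y
           = vfun N f x y * psi_poly f x (sqnorm N y / (2 * real N)) / sqnorm N y"
proof -
  define \<alpha> q s h where "\<alpha> = (2 - real (CARD('n) + N)) / 2" and "q = sqnorm N y"
    and "s = sqnorm N y / (2 * real N)" and "h = \<alpha> / q - pds [None] f x s / (2 * real N)"
  let ?A = "- pds [None] f x s - real CARD('n) / (2 * s)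
      + (4 * q * (h\<^sup>2 - \<alpha> / q\<^sup>2 - pds [None, None] f x s / (2 * real N)\<^sup>2) + 2 * real N * h)"
  have q: "0 < q"
    using y by (simp add: q_def)
  have "q * ?A = psi_poly f x s"
    using N q unfolding psi_poly_def h_def s_def \<alpha>_def q_def
    by (simp add: field_simps power2_eq_square)
  have "laplacian N (vfun N f) x y = vfun N f x y * ?A"
    unfolding laplacian_def sum_pdx_pdx_vfun[OF f heat N y, folded s_def]
      sum_pdy_pdy_vfun[OF f N y, folded s_def, folded \<alpha>_def, folded q_def]
    by (simp add: h_def algebra_simps)
  also have "\<dots> = vfun N f x y * psi_poly f x s / q"
    using q by (simp add: \<open>q * ?A = psi_poly f x s\<close>[symmetric])
  finally show ?thesis
    by (simp only: q_def s_def)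
qed

lemma bfun_radial:
  fixes f :: "real^'n \<Rightarrow> real \<Rightarrow> real"
  assumes "2 \<le> N"
  shows "bfun N f x y
           = sqrt (sqnorm N y) * exp (f x (sqnorm N y / (2 * real N)) / (real (CARD('n) + N) - 2))"
proof -
  let ?m = "real (CARD('n) + N)" and ?F = "f x (sqnorm N y / (2 * real N))"
  have m: "2 - ?m \<noteq> 0"
    using assms zero_less_card_finite[where 'a = 'n] by linarith
  have "bfun N f x y = (sqnorm N y powr ((2 - ?m) / 2)) powr (1 / (2 - ?m)) * exp (- ?F) powr (1 / (2 - ?m))"
    unfolding bfun_def vfun_radial by (rule powr_mult)
  also have "\<dots> = sqnorm N y powr (1 / 2) * exp (- ?F * (1 / (2 - ?m)))"
    using m by (simp add: powr_powr powr_def)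
  also have "\<dots> = sqrt (sqnorm N y) * exp (?F / (?m - 2))"
    by (simp add: sqnorm_nonneg powr_half_sqrt minus_divide_right)
  finally show ?thesis .
qed

lemma bfun_power_mult_vfun:
  fixes f :: "real^'n \<Rightarrow> real \<Rightarrow> real"
  assumes N: "2 \<le> N" and y: "0 < sqnorm N y"
  defines "m \<equiv> CARD('n) + N"
  shows "bfun N f x y ^ m * vfun N f x y
           = sqnorm N y * exp (2 * f x (sqnorm N y / (2 * real N)) / (real m - 2))"
proof -
  define q F c where "q = sqnorm N y" and "F = f x (sqnorm N y / (2 * real N))" and "c = real m - 2"
  have c: "0 < c"
    using N zero_less_card_finite[where 'a = 'n] unfolding c_def m_def by linarith
  have "sqrt q ^ m * q powr ((2 - real m) / 2) = q powr (real m / 2) * q powr ((2 - real m) / 2)"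
    using y by (simp add: q_def powr_half_sqrt[symmetric] powr_realpow[symmetric] powr_powr)
  also have "\<dots> = q"
    using y by (simp add: q_def powr_add[symmetric] add_divide_distrib[symmetric])
  finally have powers: "sqrt q ^ m * q powr ((2 - real m) / 2) = q" .
  have "exp (F / c) ^ m * exp (- F) = exp ((real m / c - 1) * F)"
    by (simp add: exp_of_nat_mult[symmetric] exp_add[symmetric] algebra_simps)
  also have "real m / c - 1 = 2 / c"
    using c by (simp add: c_def field_simps)
  finally have exps: "exp (F / c) ^ m * exp (- F) = exp (2 * F / c)"
    by simp
  have "bfun N f x y ^ m * vfun N f x y
      = (sqrt q ^ m * q powr ((2 - real m) / 2)) * (exp (F / c) ^ m * exp (- F))"
    unfolding bfun_radial[OF N] vfun_radial q_def F_def c_def m_def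
    by (simp add: power_mult_distrib algebra_simps)
  then show ?thesis
    unfolding powers exps by (simp add: q_def F_def c_def)
qed

definition psi_profile :: "real \<Rightarrow> (real^'n \<Rightarrow> real \<Rightarrow> real) \<Rightarrow> real^'n \<Rightarrow> real \<Rightarrow> real" where
  "psi_profile k f x s = exp (2 * k * f x s) * psi_poly f x s"

lemma psifun_eq_psi_profile:
  fixes f :: "real^'n \<Rightarrow> real \<Rightarrow> real"
  assumes f: "partials_differentiable f" and heat: "log_heat_equation f"
    and N: "2 \<le> N" and y: "0 < sqnorm N y"
  shows "psifun N f x y
           = psi_profile (1 / (real (CARD('n) + N) - 2)) f x (sqnorm N y / (2 * real N))"
proof -
  have "psifun N f x y
      = bfun N f x y ^ (CARD('n) + N) * vfun N f x y * psi_poly f x (sqnorm N y / (2 * real N)) / sqnorm N y"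
    using N by (simp add: psifun_def laplacian_vfun[OF f heat _ y])
  then show ?thesis
    using y by (simp add: bfun_power_mult_vfun[OF N y] psi_profile_def)
qed

definition psi_profile_ds :: "real \<Rightarrow> (real^'n \<Rightarrow> real \<Rightarrow> real) \<Rightarrow> real^'n \<Rightarrow> real \<Rightarrow> real" where
  "psi_profile_ds k f x s = exp (2 * k * f x s) * (2 * k * pds [None] f x s * psi_poly f x s
     + 4 * (real CARD('n) - 2) * pds [None] f x s + 4 * s * (real CARD('n) - 2) * pds [None, None] f x s
     + 8 * s * ((pds [None] f x s)\<^sup>2 - pds [None, None] f x s)
     + 4 * s\<^sup>2 * (2 * pds [None] f x s * pds [None, None] f x s - pds [None, None, None] f x s))"

definition psi_profile_dx :: "real \<Rightarrow> (real^'n \<Rightarrow> real \<Rightarrow> real) \<Rightarrow> real^'n \<Rightarrow> real \<Rightarrow> 'n \<Rightarrow> real" where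
  "psi_profile_dx k f x s j = exp (2 * k * f x s) * (2 * k * pds [Some j] f x s * psi_poly f x s
     + 4 * s * (real CARD('n) - 2) * pds [Some j, None] f x s
     + 4 * s\<^sup>2 * (2 * pds [None] f x s * pds [Some j, None] f x s - pds [Some j, None, None] f x s))"

lemma has_real_derivative_psi_profile_s:
  assumes f: "partials_differentiable f" and s: "0 < s"
  shows "((\<lambda>s. psi_profile k f x s) has_real_derivative psi_profile_ds k f x s) (at s)"
  unfolding psi_profile_def psi_profile_ds_def psi_poly_def
  by (rule DERIV_cong, (rule derivative_eq_intros has_real_derivative_f_t[OF f s]
        has_real_derivative_pds_t[OF f s] refl)+)
    (simp add: algebra_simps power2_eq_square)

lemma has_real_derivative_psi_profile_x:
  assumes f: "partials_differentiable f" and s: "0 < s"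
  shows "((\<lambda>\<sigma>. psi_profile k f (vec_upd x j \<sigma>) s) has_real_derivative psi_profile_dx k f x s j) (at (x $ j))"
  unfolding psi_profile_def psi_profile_dx_def psi_poly_def
  by (rule DERIV_cong, (rule derivative_eq_intros has_real_derivative_f_x[OF f s]
        has_real_derivative_pds_x[OF f s] refl)+)
    (simp add: algebra_simps power2_eq_square)

lemma pdx_psifun:
  fixes f :: "real^'n \<Rightarrow> real \<Rightarrow> real"
  assumes f: "partials_differentiable f" and heat: "log_heat_equation f"
    and N: "2 \<le> N" and y: "0 < sqnorm N y"
  shows "pdx j (psifun N f) x y
           = psi_profile_dx (1 / (real (CARD('n) + N) - 2)) f x (sqnorm N y / (2 * real N)) j"
proof -
  have s: "0 < sqnorm N y / (2 * real N)"
    using N y by simp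
  have "pdx j (psifun N f) x y = deriv (\<lambda>\<sigma>. psi_profile (1 / (real (CARD('n) + N) - 2)) f
      (vec_upd x j \<sigma>) (sqnorm N y / (2 * real N))) (x $ j)"
    by (rule pdx_vec_upd) (rule psifun_eq_psi_profile[OF f heat N y])
  then show ?thesis
    using DERIV_imp_deriv[OF has_real_derivative_psi_profile_x[OF f s]] by simp
qed

lemma grady_norm_psifun:
  fixes f :: "real^'n \<Rightarrow> real \<Rightarrow> real"
  assumes f: "partials_differentiable f" and heat: "log_heat_equation f"
    and N: "2 \<le> N" and y: "0 < sqnorm N y"
  defines "k \<equiv> 1 / (real (CARD('n) + N) - 2)" and "s \<equiv> sqnorm N y / (2 * real N)"
  shows "grady_norm N (psifun N f) x y = \<bar>psi_profile_ds k f x s\<bar> * sqrt (2 * s) / sqrt (real N)"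
proof -
  have s: "0 < s" and N0: "0 < real N"
    using N y by (simp_all add: s_def)
  have "((\<lambda>q. psi_profile k f x (q / (2 * real N))) has_real_derivative
      psi_profile_ds k f x s * (1 / (2 * real N))) (at (sqnorm N y))"
    using DERIV_chain2[OF has_real_derivative_psi_profile_s[OF f s, unfolded s_def]
        DERIV_cdivide[OF DERIV_ident]]
    by (simp add: s_def)
  then have "grady_norm N (psifun N f) x y
      = 2 * \<bar>psi_profile_ds k f x s * (1 / (2 * real N))\<bar> * sqrt (sqnorm N y)"
    by (intro grady_norm_radial[where G = "psifun N f" and g = "\<lambda>q. psi_profile k f x (q / (2 * real N))"] y)
      (simp add: psifun_eq_psi_profile[OF f heat N] k_def)
  also have "sqrt (sqnorm N y) = sqrt (2 * s) * sqrt (real N)"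
    using N0 by (simp add: s_def real_sqrt_mult[symmetric])
  also have "2 * \<bar>psi_profile_ds k f x s * (1 / (2 * real N))\<bar> * (sqrt (2 * s) * sqrt (real N))
      = \<bar>psi_profile_ds k f x s\<bar> * sqrt (2 * s) * (sqrt (real N) / real N)"
    using N0 by (simp add: abs_mult)
  also have "sqrt (real N) / real N = 1 / sqrt (real N)"
    using N0 by (simp add: sqrt_divide_self_eq inverse_eq_divide)
  finally show ?thesis
    by simp
qed

lemma grady_norm_bfun:
  fixes f :: "real^'n \<Rightarrow> real \<Rightarrow> real"
  assumes f: "partials_differentiable f" and N: "2 \<le> N" and y: "0 < sqnorm N y"
  defines "k \<equiv> 1 / (real (CARD('n) + N) - 2)" and "s \<equiv> sqnorm N y / (2 * real N)"
  shows "grady_norm N (bfun N f) x y = \<bar>exp (k * f x s) * (1 + 2 * k * s * pds [None] f x s)\<bar>"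
proof -
  define q E where "q = sqnorm N y" and "E = exp (k * f x s)"
  have q: "0 < q" and s: "0 < s"
    using N y by (simp_all add: q_def s_def)
  define g' where "g' = inverse (sqrt q) / 2 * E + sqrt q * (E * (k * (pds [None] f x s / (2 * real N))))"
  have "((\<lambda>q. f x (q / (2 * real N))) has_real_derivative pds [None] f x s / (2 * real N)) (at q)"
    using has_real_derivative_pds_t_scaled[OF f q, of "2 * real N" "[]"] N by (simp add: s_def q_def)
  from DERIV_mult[OF DERIV_real_sqrt[OF q] DERIV_chain2[where f = exp, OF DERIV_exp DERIV_cmult[where c = k, OF this]]]
  have "((\<lambda>q. sqrt q * exp (k * f x (q / (2 * real N)))) has_real_derivative g') (at q)"
    by (rule DERIV_cong) (simp add: g'_def E_def s_def q_def algebra_simps)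
  then have "grady_norm N (bfun N f) x y = 2 * \<bar>g'\<bar> * sqrt q"
    unfolding q_def
    by (intro grady_norm_radial[where G = "bfun N f" and g = "\<lambda>q. sqrt q * exp (k * f x (q / (2 * real N)))"] y)
      (simp add: bfun_radial[OF N] k_def)
  also have "\<dots> = \<bar>2 * g' * sqrt q\<bar>"
    using q by (simp add: abs_mult)
  also have "2 * g' * sqrt q = E * (1 + 2 * k * s * pds [None] f x s)"
    using q N by (simp add: g'_def s_def q_def field_simps)
  finally show ?thesis
    by (simp add: E_def)
qed

lemma pdx_bfun:
  fixes f :: "real^'n \<Rightarrow> real \<Rightarrow> real"
  assumes f: "partials_differentiable f" and N: "2 \<le> N" and y: "0 < sqnorm N y"
  defines "k \<equiv> 1 / (real (CARD('n) + N) - 2)" and "s \<equiv> sqnorm N y / (2 * real N)"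
  shows "pdx j (bfun N f) x y
           = sqrt (2 * s) * exp (k * f x s) * pds [Some j] f x s * (1 + (2 - real CARD('n)) * k) / sqrt (real N)"
proof -
  have s: "0 < s" and N0: "0 < real N"
    using N y by (simp_all add: s_def)
  have c: "0 < real (CARD('n) + N) - 2"
    using N zero_less_card_finite[where 'a = 'n] by linarith
  have "pdx j (bfun N f) x y = deriv (\<lambda>\<sigma>. sqrt (sqnorm N y) * exp (k * f (vec_upd x j \<sigma>) s)) (x $ j)"
    by (rule pdx_vec_upd) (simp add: bfun_radial[OF N] k_def s_def)
  also have "\<dots> = sqrt (sqnorm N y) * (exp (k * f x s) * (k * pds [Some j] f x s))"
    by (rule DERIV_imp_deriv) (auto intro!: derivative_eq_intros has_real_derivative_f_x[OF f s])
  also have "sqrt (sqnorm N y) = sqrt (2 * s) * sqrt (real N)"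
    using N0 by (simp add: s_def real_sqrt_mult[symmetric])
  finally have "pdx j (bfun N f) x y
      = sqrt (2 * s) * exp (k * f x s) * pds [Some j] f x s * (sqrt (real N) * k)"
    by (simp add: algebra_simps)
  also have "sqrt (real N) * k = (1 + (2 - real CARD('n)) * k) / sqrt (real N)"
    \<comment> \<open>\<open>N * k = 1 + (2 - n) * k\<close> stays bounded as \<open>N\<close> grows\<close>
  proof -
    have "(1 + (2 - real CARD('n)) * k) / sqrt (real N) = k * (real N / sqrt (real N))"
      using c by (simp add: k_def field_simps)
    also have "real N / sqrt (real N) = sqrt (real N)"
      by (rule real_div_sqrt) simp
    finally show ?thesis
      by simp
  qed
  finally show ?thesis
    by (simp add: algebra_simps)
qed

lemma Bfun_pds_on_slab:
  fixes f :: "real^'n \<Rightarrow> real \<Rightarrow> real" and ds :: "'n \<Rightarrow> 'n option list"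
  assumes bounded: "\<forall>ds. \<exists>B. \<forall>x t. \<tau>1 \<le> t \<and> t \<le> \<tau>2 \<longrightarrow> \<bar>pds ds f x t\<bar> \<le> B"
    and slab: "\<And>z. z \<in> Z \<Longrightarrow> \<tau>1 \<le> s z \<and> s z \<le> \<tau>2"
  shows "Bfun (\<lambda>z. pds (ds (j z)) f (x z) (s z)) (principal Z)"
proof -
  from bounded have "\<forall>i. \<exists>b. \<forall>x t. \<tau>1 \<le> t \<and> t \<le> \<tau>2 \<longrightarrow> \<bar>pds (ds i) f x t\<bar> \<le> b"
    by blast
  then obtain B where B: "\<forall>i x t. \<tau>1 \<le> t \<and> t \<le> \<tau>2 \<longrightarrow> \<bar>pds (ds i) f x t\<bar> \<le> B i"
    by (auto dest!: choice)
  have "\<bar>pds (ds (j z)) f (x z) (s z)\<bar> \<le> (\<Sum>i\<in>UNIV. \<bar>B i\<bar>)" if "z \<in> Z" for z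
  proof -
    have "\<bar>pds (ds (j z)) f (x z) (s z)\<bar> \<le> B (j z)"
      using B slab[OF that] by blast
    also have "\<dots> \<le> (\<Sum>i\<in>UNIV. \<bar>B i\<bar>)"
      using member_le_sum[of "j z" UNIV "\<lambda>i. \<bar>B i\<bar>"] by simp
    finally show ?thesis .
  qed
  then show ?thesis
    by (intro Bfun_principalI) simp
qed

lemma psi_b_profiles_bounded:
  fixes f :: "real^'n \<Rightarrow> real \<Rightarrow> real"
  assumes bounded: "\<forall>ds. \<exists>B. \<forall>x t. \<tau>1 \<le> t \<and> t \<le> \<tau>2 \<longrightarrow> \<bar>pds ds f x t\<bar> \<le> B"
  obtains B where "0 < B" and "\<And>k x s j. 0 \<le> k \<Longrightarrow> k \<le> 1 \<Longrightarrow> \<tau>1 \<le> s \<Longrightarrow> s \<le> \<tau>2 \<Longrightarrow>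
      \<bar>psi_profile k f x s\<bar> \<le> B \<and> \<bar>psi_profile_dx k f x s j\<bar> \<le> B
      \<and> \<bar>psi_profile_ds k f x s * sqrt (2 * s)\<bar> \<le> B
      \<and> \<bar>exp (k * f x s) * (1 + 2 * k * s * pds [None] f x s)\<bar> \<le> B
      \<and> \<bar>sqrt (2 * s) * exp (k * f x s) * pds [Some j] f x s * (1 + (2 - real CARD('n)) * k)\<bar> \<le> B"
proof -
  \<comment> \<open>\<open>k = 1 / (m - 2)\<close> lies in \<open>[0, 1]\<close> for every \<open>N\<close>, so a bound over this box is uniform in \<open>N\<close>\<close>
  define Z :: "(real \<times> (real^'n) \<times> real \<times> 'n) set" where "Z = {0..1} \<times> UNIV \<times> {\<tau>1..\<tau>2} \<times> UNIV"
  define k :: "real \<times> (real^'n) \<times> real \<times> 'n \<Rightarrow> real" where "k z = fst z" for z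
  define x :: "real \<times> (real^'n) \<times> real \<times> 'n \<Rightarrow> real^'n" where "x z = fst (snd z)" for z
  define s :: "real \<times> (real^'n) \<times> real \<times> 'n \<Rightarrow> real" where "s z = fst (snd (snd z))" for z
  define j :: "real \<times> (real^'n) \<times> real \<times> 'n \<Rightarrow> 'n" where "j z = snd (snd (snd z))" for z
  have slab: "\<tau>1 \<le> s z \<and> s z \<le> \<tau>2" if "z \<in> Z" for z
    using that by (auto simp: Z_def s_def)
  have k_bounded: "Bfun k (principal Z)"
    by (rule Bfun_principalI[where B = 1]) (auto simp: Z_def k_def)
  have s_bounded: "Bfun s (principal Z)"
    by (rule Bfun_principalI[where B = "\<bar>\<tau>1\<bar> + \<bar>\<tau>2\<bar>"]) (use slab in force)
  have pds_bounded: "Bfun (\<lambda>z. pds ds f (x z) (s z)) (principal Z)" for ds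
    using Bfun_pds_on_slab[OF bounded, where Z = Z and s = s and ds = "\<lambda>_. ds", OF slab] by simp
  have pds_x_bounded: "Bfun (\<lambda>z. pds (Some (j z) # ds) f (x z) (s z)) (principal Z)" for ds
    using Bfun_pds_on_slab[OF bounded, where Z = Z and s = s and ds = "\<lambda>i. Some i # ds" and j = j, OF slab] by simp
  have f_bounded: "Bfun (\<lambda>z. f (x z) (s z)) (principal Z)"
    using pds_bounded[of "[]"] by simp
  have "Bfun (\<lambda>z. \<bar>psi_profile (k z) f (x z) (s z)\<bar> + \<bar>psi_profile_dx (k z) f (x z) (s z) (j z)\<bar>
      + \<bar>psi_profile_ds (k z) f (x z) (s z) * sqrt (2 * s z)\<bar>
      + \<bar>exp (k z * f (x z) (s z)) * (1 + 2 * k z * s z * pds [None] f (x z) (s z))\<bar>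
      + \<bar>sqrt (2 * s z) * exp (k z * f (x z) (s z)) * pds [Some (j z)] f (x z) (s z)
          * (1 + (2 - real CARD('n)) * k z)\<bar>) (principal Z)" (is "Bfun ?E _")
    unfolding psi_profile_def psi_profile_dx_def psi_profile_ds_def psi_poly_def
    by (intro Bfun_add Bfun_diff Bfun_mult Bfun_power Bfun_abs Bfun_exp Bfun_sqrt Bfun_const
        k_bounded s_bounded pds_bounded pds_x_bounded f_bounded)
  then obtain B where "0 < B" and B: "\<forall>z\<in>Z. norm (?E z) \<le> B"
    by (auto elim!: BfunE simp: eventually_principal)
  show thesis
  proof (rule that[OF \<open>0 < B\<close>], goal_cases)
    case (1 k0 x0 s0 j0)
    then have "norm (?E (k0, x0, s0, j0)) \<le> B"
      using B by (simp add: Z_def)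
    then show ?case
      unfolding k_def x_def s_def j_def fst_conv snd_conv real_norm_def by (smt (verit))
  qed
qed

lemma psi_b_gradients_le:
  fixes f :: "real^'n \<Rightarrow> real \<Rightarrow> real"
  assumes f: "partials_differentiable f" and heat: "log_heat_equation f" and "0 < \<tau>1"
    and N: "2 \<le> N" and slab: "\<tau>1 \<le> sqnorm N y / (2 * real N)" "sqnorm N y / (2 * real N) \<le> \<tau>2"
    and bound: "\<And>k x s j. 0 \<le> k \<Longrightarrow> k \<le> 1 \<Longrightarrow> \<tau>1 \<le> s \<Longrightarrow> s \<le> \<tau>2 \<Longrightarrow>
      \<bar>psi_profile k f x s\<bar> \<le> B \<and> \<bar>psi_profile_dx k f x s j\<bar> \<le> B
      \<and> \<bar>psi_profile_ds k f x s * sqrt (2 * s)\<bar> \<le> B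
      \<and> \<bar>exp (k * f x s) * (1 + 2 * k * s * pds [None] f x s)\<bar> \<le> B
      \<and> \<bar>sqrt (2 * s) * exp (k * f x s) * pds [Some j] f x s * (1 + (2 - real CARD('n)) * k)\<bar> \<le> B"
  shows "\<bar>psifun N f x y\<bar> \<le> B \<and> gradx_norm (psifun N f) x y \<le> sqrt (real CARD('n)) * B
    \<and> grady_norm N (bfun N f) x y \<le> B \<and> grady_norm N (psifun N f) x y \<le> B / sqrt (real N)
    \<and> gradx_norm (bfun N f) x y \<le> sqrt (real CARD('n)) * B / sqrt (real N)"
proof -
  define k s where "k = 1 / (real (CARD('n) + N) - 2)" and "s = sqnorm N y / (2 * real N)"
  have "1 \<le> real (CARD('n) + N) - 2"
    using N zero_less_card_finite[where 'a = 'n] by linarith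
  then have "0 \<le> k" "k \<le> 1"
    by (simp_all add: k_def)
  note bound = bound[OF this slab[folded s_def]]
  have s: "0 < s"
    using slab \<open>0 < \<tau>1\<close> by (simp add: s_def)
  then have y: "0 < sqnorm N y"
    by (simp add: s_def zero_less_divide_iff)
  have N0: "0 < sqrt (real N)"
    using N by simp
  have "gradx_norm (psifun N f) x y \<le> sqrt (real CARD('n)) * B"
    using bound by (intro gradx_norm_le) (simp add: pdx_psifun[OF f heat N y, folded k_def s_def])
  moreover have "grady_norm N (psifun N f) x y \<le> B / sqrt (real N)"
    using bound[of x undefined] s N0
    by (simp add: grady_norm_psifun[OF f heat N y, folded k_def s_def] abs_mult divide_right_mono)
  moreover have "gradx_norm (bfun N f) x y \<le> sqrt (real CARD('n)) * (B / sqrt (real N))"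
    using bound N0
    by (intro gradx_norm_le) (simp add: pdx_bfun[OF f N y, folded k_def s_def] abs_divide divide_right_mono)
  ultimately show ?thesis
    using bound[of x undefined]
    by (simp add: psifun_eq_psi_profile[OF f heat N y, folded k_def s_def]
        grady_norm_bfun[OF f N y, folded k_def s_def])
qed

theorem lemma2p5:
  fixes u f :: "real^'n \<Rightarrow> real \<Rightarrow> real" and \<tau>1 \<tau>2 :: real
  assumes tau: "0 < \<tau>1" "\<tau>1 < \<tau>2"
    and u_f: "\<forall>x t. 0 < t \<longrightarrow> u x t = t powr (- real CARD('n) / 2) * exp (- f x t)"
    and f_smooth: "\<forall>ds d x t. 0 < t \<longrightarrow>
          dline d (pds ds f) x t differentiable (at (dbase d x t))"
    and heat: "\<forall>x t. 0 < t \<longrightarrow>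
          ((\<lambda>s. u x s) has_real_derivative (\<Sum>j\<in>UNIV. pd (Some j) (pd (Some j) u) x t)) (at t)"
    and f_bounded: "\<forall>ds. \<exists>B. \<forall>x t. \<tau>1 \<le> t \<and> t \<le> \<tau>2 \<longrightarrow> \<bar>pds ds f x t\<bar> \<le> B"
  shows "\<exists>C. \<forall>N::nat. 3 \<le> N \<longrightarrow>
          (\<forall>x y. \<tau>1 \<le> sqnorm N y / (2 * real N) \<and> sqnorm N y / (2 * real N) \<le> \<tau>2 \<longrightarrow>
              \<bar>psifun N f x y\<bar> \<le> C
            \<and> gradx_norm (psifun N f) x y \<le> C
            \<and> grady_norm N (bfun N f) x y \<le> C
            \<and> grady_norm N (psifun N f) x y \<le> C / sqrt (real N)
            \<and> gradx_norm (bfun N f) x y \<le> C / sqrt (real N))"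
proof -
  have f: "partials_differentiable f"
    using f_smooth by (simp add: partials_differentiable_def)
  have heat_f: "log_heat_equation f"
    by (rule log_heat_equation_if_heat[OF f u_f heat])
  obtain B where "0 < B" and B: "\<And>k x s j. 0 \<le> k \<Longrightarrow> k \<le> 1 \<Longrightarrow> \<tau>1 \<le> s \<Longrightarrow> s \<le> \<tau>2 \<Longrightarrow>
      \<bar>psi_profile k f x s\<bar> \<le> B \<and> \<bar>psi_profile_dx k f x s j\<bar> \<le> B
      \<and> \<bar>psi_profile_ds k f x s * sqrt (2 * s)\<bar> \<le> B
      \<and> \<bar>exp (k * f x s) * (1 + 2 * k * s * pds [None] f x s)\<bar> \<le> B
      \<and> \<bar>sqrt (2 * s) * exp (k * f x s) * pds [Some j] f x s * (1 + (2 - real CARD('n)) * k)\<bar> \<le> B"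
    using psi_b_profiles_bounded[OF f_bounded] by blast
  have B_le: "B \<le> sqrt (real CARD('n)) * B"
    using \<open>0 < B\<close> zero_less_card_finite[where 'a = 'n] by simp
  show ?thesis
  proof (intro exI[of _ "sqrt (real CARD('n)) * B"] allI impI, goal_cases)
    case (1 N x y)
    then have "\<bar>psifun N f x y\<bar> \<le> B \<and> gradx_norm (psifun N f) x y \<le> sqrt (real CARD('n)) * B
        \<and> grady_norm N (bfun N f) x y \<le> B \<and> grady_norm N (psifun N f) x y \<le> B / sqrt (real N)
        \<and> gradx_norm (bfun N f) x y \<le> sqrt (real CARD('n)) * B / sqrt (real N)"
      by (intro psi_b_gradients_le[OF f heat_f tau(1) _ _ _ B]) simp_all
    moreover have "B / sqrt (real N) \<le> sqrt (real CARD('n)) * B / sqrt (real N)"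
      using B_le by (simp add: divide_right_mono)
    ultimately show ?case
      using B_le by simp
  qed
qed

end
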